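(* Let $U_{(1)}\leq\dots\leq U_{(n)}$ be the order statistics of an i.i.d. sample of size $n$ from the uniform distribution on $[0,1]$. Then for all $k\in\{1,\dots,n\}$ and $t>0$: \[\Pr\left(U_{(k)}>\frac{(\sqrt{k-1}+\sqrt t)^2}{n}\right)=\Pr\left(1-U_{(n-k+1)}>\frac{(\sqrt{k-1}+\sqrt t)^2}{n}\right)\leq e^{-t},\] \[\Pr\left(U_{(k)}<\frac{(\sqrt k-\sqrt t)^2}{n}\right)=\Pr\left(1-U_{(n-k+1)}<\frac{(\sqrt k-\sqrt t)^2}{n}\right)\leq e^{-2t}.\]
   Formalization: The bound $e^{-2t}$ on the lower-tail probabilities holds only for t <= k, while both equalities of probabilities hold for all t > 0. Apart from conventions, each condition added here is assumed in the paper as well or is needed for the statement above to hold. *)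

theory Defs
  imports "HOL-Probability.Probability"
begin

definition unif_sample :: "nat \<Rightarrow> (nat \<Rightarrow> real) measure" where
  "unif_sample n = PiM {..<n} (\<lambda>_. uniform_measure lborel {0..1::real})"

definition order_stat :: "nat \<Rightarrow> nat \<Rightarrow> (nat \<Rightarrow> real) \<Rightarrow> real" where
  "order_stat n k x = sort (map x [0..<n]) ! (k - 1)"

end

theory Submission
  imports Defs
begin

text \<open>
  The k-th order statistic exceeds a iff fewer than k sample points lie in [0, a], and it is
  below b iff at least k of them lie in [0, b). These counts N are binomial with some parameter p,
  so the exponential Markov inequality bounds the two events by exp (l (k - 1)) E e^(-l N) and
  exp (-l k) E e^(l N), where E e^(l N) = (1 - p + p e^l)^n \<le> exp (n p (e^l - 1)). For
  n p = (sqrt (k - 1) + sqrt t)^2, resp. n p = (sqrt k - sqrt t)^2, the optimal l gives exp (-t),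
  resp. exp (-2 t); the latter rests on ln (1 - r) \<le> -r - r^2/2. The equalities hold because
  x \<mapsto> 1 - x preserves the uniform product measure and maps the k-th order statistic to one
  minus the (n - k + 1)-th.
\<close>

lemma sorted_nth_iff_length_filter:
  fixes xs :: "'a::linorder list"
  assumes "sorted xs" and down: "\<And>y z. P y \<Longrightarrow> z \<le> y \<Longrightarrow> P z" and "k < length xs"
  shows "P (xs ! k) \<longleftrightarrow> k < length (filter P xs)"
  using assms(1,3)
proof (induction xs arbitrary: k)
  case Nil
  then show ?case by simp
next
  case (Cons y ys)
  show ?case
  proof (cases "P y")
    case True
    then show ?thesis using Cons by (cases k) auto
  next
    case False
    have "\<not> P z" if "z \<in> set (y # ys)" for z
      using that Cons.prems(1) False down by auto
    then show ?thesis using nth_mem[OF Cons.prems(2)] by (auto simp: filter_empty_conv)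
  qed
qed

definition sample_count :: "nat \<Rightarrow> 'a set \<Rightarrow> (nat \<Rightarrow> 'a) \<Rightarrow> nat" where
  "sample_count n A x = card {i. i < n \<and> x i \<in> A}"

lemma order_stat_iff_sample_count:
  assumes down: "\<And>y z. P y \<Longrightarrow> z \<le> y \<Longrightarrow> P z" and "1 \<le> k" "k \<le> n"
  shows "P (order_stat n k x) \<longleftrightarrow> k \<le> sample_count n (Collect P) x"
proof -
  have "P (order_stat n k x) \<longleftrightarrow> k - 1 < length (filter P (sort (map x [0..<n])))"
    unfolding order_stat_def using assms by (intro sorted_nth_iff_length_filter) auto
  also have "length (filter P (sort (map x [0..<n]))) = sample_count n (Collect P) x"
    by (auto simp: filter_sort length_filter_conv_card sample_count_def
        intro!: arg_cong[where f=card])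
  finally show ?thesis using assms(2) by linarith
qed

lemma order_stat_le_iff:
  "1 \<le> k \<Longrightarrow> k \<le> n \<Longrightarrow> order_stat n k x \<le> a \<longleftrightarrow> k \<le> sample_count n {..a} x"
  using order_stat_iff_sample_count[of "\<lambda>y. y \<le> a"] by (simp add: atMost_def)

lemma order_stat_greater_iff:
  "1 \<le> k \<Longrightarrow> k \<le> n \<Longrightarrow> a < order_stat n k x \<longleftrightarrow> sample_count n {..a} x < k"
  using order_stat_le_iff[of k n x a] by linarith

lemma order_stat_less_iff:
  "1 \<le> k \<Longrightarrow> k \<le> n \<Longrightarrow> order_stat n k x < b \<longleftrightarrow> k \<le> sample_count n {..<b} x"
  using order_stat_iff_sample_count[of "\<lambda>y. y < b"] by (simp add: lessThan_def)

lemma sort_map_antimono: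
  fixes f :: "'a::linorder \<Rightarrow> 'b::linorder"
  assumes "\<And>x y. x \<le> y \<Longrightarrow> f y \<le> f x"
  shows "sort (map f xs) = rev (map f (sort xs))"
  by (rule properties_for_sort)
    (auto simp: sorted_wrt_rev sorted_wrt_map assms intro: sorted_wrt_mono_rel[OF _ sorted_sort])

lemma order_stat_reflect:
  assumes "1 \<le> k" "k \<le> n"
  shows "order_stat n k (\<lambda>i\<in>{..<n}. 1 - x i) = 1 - order_stat n (n - k + 1) x"
proof -
  have "map (\<lambda>i\<in>{..<n}. 1 - x i) [0..<n] = map (\<lambda>y. 1 - y) (map x [0..<n])"
    by simp
  also have "sort \<dots> = rev (map (\<lambda>y. 1 - y) (sort (map x [0..<n])))"
    by (rule sort_map_antimono) simp
  finally show ?thesis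
    using assms by (simp add: order_stat_def rev_nth)
qed

lemma real_sample_count_eq_sum:
  "real (sample_count n A x) = (\<Sum>i<n. indicator A (x i))"
  unfolding sample_count_def indicator_def by (simp add: sum.If_cases Int_def)

lemma borel_measurable_sample_count[measurable]:
  assumes [measurable]: "A \<in> sets M"
  shows "(\<lambda>x. real (sample_count n A x)) \<in> borel_measurable (PiM {..<n} (\<lambda>_. M))"
  unfolding real_sample_count_eq_sum by measurable

lemma sample_count_chernoff:
  assumes "prob_space M" and [measurable]: "A \<in> sets M"
  defines "p \<equiv> measure M A"
  shows "measure (PiM {..<n} (\<lambda>_. M))
           {x \<in> space (PiM {..<n} (\<lambda>_. M)). 0 \<le> l * (real (sample_count n A x) - m)}
         \<le> exp (- l * m) * (1 - p + p * exp l) ^ n"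
proof -
  let ?P = "PiM {..<n} (\<lambda>_. M)"
  interpret M: prob_space M by fact
  interpret P: product_prob_space "\<lambda>_. M" ..
  interpret Pn: prob_space ?P by (rule prob_space_PiM) (rule M.prob_space_axioms)
  have mgf_1: "(\<integral>\<^sup>+ y. ennreal (exp (l * indicator A y)) \<partial>M) = ennreal (1 - p + p * exp l)"
  proof -
    have "(\<integral>\<^sup>+ y. ennreal (exp (l * indicator A y)) \<partial>M)
        = (\<integral>\<^sup>+ y. indicator (space M - A) y + ennreal (exp l) * indicator A y \<partial>M)"
      by (intro nn_integral_cong) (auto split: split_indicator)
    also have "\<dots> = emeasure M (space M - A) + ennreal (exp l) * emeasure M A"
      by (subst nn_integral_add) (auto simp: nn_integral_cmult_indicator)
    also have "\<dots> = ennreal (1 - p + p * exp l)"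
      using M.prob_compl[of A] M.prob_le_1[of A]
      by (simp add: p_def M.emeasure_eq_measure ennreal_plus[symmetric] ennreal_mult' mult.commute)
    finally show ?thesis .
  qed
  have base: "0 \<le> 1 - p + p * exp l"
    using M.prob_le_1[of A] by (simp add: p_def)
  let ?N = "\<lambda>x. real (sample_count n A x)"
  let ?B = "{x \<in> space ?P. 0 \<le> l * (?N x - m)}"
  have "emeasure ?P ?B = (\<integral>\<^sup>+ x. indicator ?B x \<partial>?P)"
    by simp
  also have "\<dots> \<le> (\<integral>\<^sup>+ x. ennreal (exp (l * (?N x - m))) \<partial>?P)"
    by (intro nn_integral_mono) (auto split: split_indicator)
  also have "\<dots> = (\<integral>\<^sup>+ x. ennreal (exp (- l * m))
      * (\<Prod>i<n. ennreal (exp (l * indicator A (x i)))) \<partial>?P)"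
  proof (intro nn_integral_cong)
    fix x
    have "exp (l * (?N x - m)) = exp (- l * m) * (\<Prod>i<n. exp (l * indicator A (x i)))"
      by (simp add: real_sample_count_eq_sum exp_sum[symmetric] exp_add[symmetric]
          sum_distrib_left algebra_simps)
    then show "ennreal (exp (l * (?N x - m)))
        = ennreal (exp (- l * m)) * (\<Prod>i<n. ennreal (exp (l * indicator A (x i))))"
      by (simp add: prod_ennreal ennreal_mult' prod_nonneg)
  qed
  also have "\<dots> = ennreal (exp (- l * m)) * (\<Prod>i<n. \<integral>\<^sup>+ y. ennreal (exp (l * indicator A y)) \<partial>M)"
    by (subst nn_integral_cmult, measurable)
      (subst P.product_nn_integral_prod[where f="\<lambda>_ y. ennreal (exp (l * indicator A y))"], auto)
  also have "\<dots> = ennreal (exp (- l * m) * (1 - p + p * exp l) ^ n)"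
    using base by (simp add: mgf_1 ennreal_power ennreal_mult')
  finally show ?thesis
    using base by (simp add: Pn.emeasure_eq_measure)
qed

lemma sample_count_chernoff_poisson:
  assumes "prob_space M" and "A \<in> sets M"
  defines "p \<equiv> measure M A"
  shows "measure (PiM {..<n} (\<lambda>_. M))
           {x \<in> space (PiM {..<n} (\<lambda>_. M)). 0 \<le> l * (real (sample_count n A x) - m)}
         \<le> exp (n * p * (exp l - 1) - l * m)"
proof -
  have "0 \<le> p" "p \<le> 1"
    using prob_space.prob_le_1[OF assms(1)] by (auto simp: p_def)
  have "1 - p + p * exp l \<le> exp (p * (exp l - 1))"
    using exp_ge_add_one_self[of "p * (exp l - 1)"] by (simp add: algebra_simps)
  moreover have "0 \<le> 1 - p + p * exp l"
    using \<open>0 \<le> p\<close> \<open>p \<le> 1\<close> by (intro add_nonneg_nonneg) auto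
  ultimately have "(1 - p + p * exp l) ^ n \<le> exp (p * (exp l - 1)) ^ n"
    by (rule power_mono)
  also have "\<dots> = exp (n * p * (exp l - 1))"
    by (simp add: exp_of_nat_mult[symmetric] mult.assoc)
  finally have mgf_le: "(1 - p + p * exp l) ^ n \<le> exp (n * p * (exp l - 1))" .
  note sample_count_chernoff[OF assms(1,2), of n l m, folded p_def]
  also have "exp (- l * m) * (1 - p + p * exp l) ^ n \<le> exp (- l * m) * exp (n * p * (exp l - 1))"
    using mgf_le by (rule mult_left_mono) simp
  also have "\<dots> = exp (n * p * (exp l - 1) - l * m)"
    by (simp add: exp_add[symmetric])
  finally show ?thesis .
qed

lemma ln_one_minus_le_quadratic:
  fixes r :: real
  assumes "0 \<le> r" "r < 1"
  shows "ln (1 - r) \<le> - r - r\<^sup>2 / 2"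
proof -
  define f where "f x = - 2 * ln (1 - x) - 2 * x - x\<^sup>2" for x :: real
  have "f 0 \<le> f r"
  proof (rule DERIV_nonneg_imp_increasing_open[OF assms(1)])
    fix x :: real
    assume x: "0 < x" "x < r"
    have "(f has_real_derivative 2 * x\<^sup>2 / (1 - x)) (at x)"
      unfolding f_def using x assms
      by (auto intro!: derivative_eq_intros simp: field_simps power2_eq_square)
    moreover have "0 \<le> 2 * x\<^sup>2 / (1 - x)"
      using x assms by simp
    ultimately show "\<exists>y. (f has_real_derivative y) (at x) \<and> 0 \<le> y"
      by blast
  next
    show "continuous_on {0..r} f"
      unfolding f_def using assms by (intro continuous_intros) auto
  qed
  then show ?thesis
    by (simp add: f_def)
qed

lemma poisson_chernoff_lower_tail:
  fixes P m t :: real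
  assumes "0 \<le> m" "0 \<le> t"
    and bound: "\<And>l. 0 \<le> l \<Longrightarrow> P \<le> exp ((sqrt m + sqrt t)\<^sup>2 * (exp (- l) - 1) + l * m)"
  shows "P \<le> exp (- t)"
proof (cases "m = 0")
  case True
  \<comment> \<open>no minimiser: the exponent decreases to \<open>-t\<close> as \<open>l \<rightarrow> \<infinity>\<close>\<close>
  have exp_neg_lim: "((\<lambda>l::real. exp (- l)) \<longlongrightarrow> 0) at_top"
    by (rule filterlim_compose[OF exp_at_bot filterlim_uminus_at_bot_at_top])
  have "((\<lambda>l. exp (t * (exp (- l) - 1))) \<longlongrightarrow> exp (t * (0 - 1))) at_top"
    by (intro tendsto_intros exp_neg_lim)
  moreover have "\<forall>\<^sub>F l in at_top. P \<le> exp (t * (exp (- l) - 1))"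
    using bound \<open>0 \<le> t\<close> True by (auto simp: eventually_at_top_linorder)
  ultimately have "P \<le> exp (t * (0 - 1))"
    using trivial_limit_at_top_linorder by (rule tendsto_lowerbound)
  then show ?thesis
    by simp
next
  case False
  define v u where "v = sqrt m" and "u = sqrt t"
  have "0 < v" "0 \<le> u" "m = v\<^sup>2" "t = u\<^sup>2"
    using \<open>0 \<le> m\<close> \<open>0 \<le> t\<close> False by (simp_all add: v_def u_def)
  \<comment> \<open>the minimiser of the exponent: \<open>e\<^sup>l = (sqrt m + sqrt t)\<^sup>2 / m\<close>\<close>
  define l where "l = 2 * ln ((v + u) / v)"
  have "0 \<le> l"
    using \<open>0 < v\<close> \<open>0 \<le> u\<close> by (simp add: l_def)
  have "exp (ln ((v + u) / v)) = (v + u) / v"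
    using \<open>0 < v\<close> \<open>0 \<le> u\<close> by simp
  then have "exp (- l) = inverse ((v + u) / v * ((v + u) / v))"
    by (simp only: l_def exp_minus mult_2 exp_add)
  then have "(v + u)\<^sup>2 * exp (- l) = v\<^sup>2"
    using \<open>0 < v\<close> \<open>0 \<le> u\<close> by (simp add: power2_eq_square)
  then have "(v + u)\<^sup>2 * (exp (- l) - 1) = v\<^sup>2 - (v + u)\<^sup>2"
    by (simp add: right_diff_distrib)
  also have "\<dots> = - 2 * u * v - t"
    by (simp add: \<open>t = u\<^sup>2\<close> power2_eq_square algebra_simps)
  finally have "(v + u)\<^sup>2 * (exp (- l) - 1) = - 2 * u * v - t" .
  have "ln ((v + u) / v) \<le> u / v"
    using ln_add_one_self_le_self[of "u / v"] \<open>0 < v\<close> \<open>0 \<le> u\<close> by (simp add: add_divide_distrib)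
  then have "l * m \<le> 2 * (u / v) * v\<^sup>2"
    unfolding l_def \<open>m = v\<^sup>2\<close> by (intro mult_right_mono mult_left_mono) auto
  also have "\<dots> = 2 * u * v"
    using \<open>0 < v\<close> by (simp add: power2_eq_square)
  finally have "(v + u)\<^sup>2 * (exp (- l) - 1) + l * m \<le> - t"
    using \<open>(v + u)\<^sup>2 * (exp (- l) - 1) = - 2 * u * v - t\<close> by linarith
  moreover have "P \<le> exp ((v + u)\<^sup>2 * (exp (- l) - 1) + l * m)"
    using bound[OF \<open>0 \<le> l\<close>] by (simp only: v_def u_def)
  ultimately show ?thesis
    by (meson exp_le_cancel_iff order_trans)
qed

lemma poisson_chernoff_upper_tail:
  fixes P m t :: real
  assumes "0 \<le> t" "t \<le> m"
    and bound: "\<And>l. 0 \<le> l \<Longrightarrow> P \<le> exp ((sqrt m - sqrt t)\<^sup>2 * (exp l - 1) - l * m)"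
  shows "P \<le> exp (- 2 * t)"
proof (cases "t = m")
  case True
  then show ?thesis
    using bound[of 2] by (simp only: diff_self power_zero_numeral mult_zero_left) simp
next
  case False
  define w u where "w = sqrt m" and "u = sqrt t"
  have "0 \<le> u" "u < w" "m = w\<^sup>2" "t = u\<^sup>2"
    using \<open>0 \<le> t\<close> \<open>t \<le> m\<close> False by (simp_all add: w_def u_def)
  define r where "r = u / w"
  have "0 \<le> r" "r < 1" "u = r * w"
    using \<open>0 \<le> u\<close> \<open>u < w\<close> by (auto simp: r_def)
  \<comment> \<open>the minimiser of the exponent: \<open>e\<^sup>l = m / (sqrt m - sqrt t)\<^sup>2\<close>\<close>
  define l where "l = - 2 * ln (1 - r)"
  have "0 \<le> l"
    using \<open>0 \<le> r\<close> \<open>r < 1\<close> by (simp add: l_def)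
  have "exp (ln (1 - r)) = 1 - r"
    using \<open>r < 1\<close> by simp
  moreover have "l = - (ln (1 - r) + ln (1 - r))"
    by (simp add: l_def)
  ultimately have "exp l = inverse ((1 - r) * (1 - r))"
    by (simp only: exp_minus exp_add)
  moreover have "(w - u)\<^sup>2 = (1 - r) * (1 - r) * w\<^sup>2"
    by (simp add: \<open>u = r * w\<close> power2_eq_square algebra_simps)
  ultimately have "(w - u)\<^sup>2 * exp l = w\<^sup>2 * ((1 - r) * (1 - r) * inverse ((1 - r) * (1 - r)))"
    by (simp only: ac_simps)
  also have "\<dots> = w\<^sup>2"
    using \<open>r < 1\<close> by (subst right_inverse) auto
  finally have "(w - u)\<^sup>2 * (exp l - 1) = w\<^sup>2 - (w - u)\<^sup>2"
    by (simp add: right_diff_distrib)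
  also have "\<dots> = 2 * u * w - t"
    by (simp add: \<open>t = u\<^sup>2\<close> power2_eq_square algebra_simps)
  finally have "(w - u)\<^sup>2 * (exp l - 1) = 2 * u * w - t" .
  have "(2 * r + r\<^sup>2) * w\<^sup>2 \<le> l * w\<^sup>2"
    using ln_one_minus_le_quadratic[OF \<open>0 \<le> r\<close> \<open>r < 1\<close>]
    by (intro mult_right_mono) (auto simp: l_def)
  then have "2 * u * w + t \<le> l * m"
    by (simp add: \<open>t = u\<^sup>2\<close> \<open>u = r * w\<close> \<open>m = w\<^sup>2\<close> power2_eq_square algebra_simps)
  with \<open>(w - u)\<^sup>2 * (exp l - 1) = 2 * u * w - t\<close>
  have "(w - u)\<^sup>2 * (exp l - 1) - l * m \<le> - 2 * t"
    by linarith
  moreover have "P \<le> exp ((w - u)\<^sup>2 * (exp l - 1) - l * m)"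
    using bound[OF \<open>0 \<le> l\<close>] by (simp only: w_def u_def)
  ultimately show ?thesis
    by (meson exp_le_cancel_iff order_trans)
qed

abbreviation unif01 :: "real measure" where
  "unif01 \<equiv> uniform_measure lborel {0..1}"

lemma prob_space_unif01: "prob_space unif01"
  by (rule prob_space_uniform_measure) auto

lemma prob_space_unif_sample: "prob_space (unif_sample n)"
  unfolding unif_sample_def by (intro prob_space_PiM prob_space_unif01)

lemma measure_unif01_atMost: "0 \<le> a \<Longrightarrow> measure unif01 {..a} = min a 1"
proof -
  assume "0 \<le> a"
  then have "{0..1} \<inter> {..a} = {0..min a 1}" by auto
  with \<open>0 \<le> a\<close> show ?thesis by simp
qed

lemma measure_unif01_lessThan: "0 \<le> b \<Longrightarrow> b \<le> 1 \<Longrightarrow> measure unif01 {..<b} = b"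
proof -
  assume "0 \<le> b" "b \<le> 1"
  then have "{0..1} \<inter> {..<b} = {0..<b}" by auto
  with \<open>0 \<le> b\<close> \<open>b \<le> 1\<close> show ?thesis by simp
qed

lemma lborel_distr_reflect: "distr lborel borel (\<lambda>y::real. 1 - y) = lborel"
  by (subst lborel_real_affine[of "-1" 1]) (auto simp: density_1 one_ennreal_def[symmetric])

lemma unif01_distr_reflect: "distr unif01 unif01 (\<lambda>y. 1 - y) = unif01"
proof (rule measure_eqI)
  fix B assume "B \<in> sets (distr unif01 unif01 (\<lambda>y. 1 - y))"
  then have [measurable]: "B \<in> sets borel" by simp
  have [measurable]: "(\<lambda>y::real. 1 - y) -` B \<in> sets borel"
    using measurable_sets_borel[of "\<lambda>y::real. 1 - y" borel B] by simp
  have "(\<lambda>y::real. 1 - y) -` B \<inter> {0..1} = (\<lambda>y. 1 - y) -` ({0..1} \<inter> B)" by auto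
  moreover have "emeasure lborel ((\<lambda>y::real. 1 - y) -` ({0..1} \<inter> B)) = emeasure lborel ({0..1} \<inter> B)"
    by (subst (2) lborel_distr_reflect[symmetric]) (simp add: emeasure_distr)
  ultimately show "emeasure (distr unif01 unif01 (\<lambda>y. 1 - y)) B = emeasure unif01 B"
    by (simp add: emeasure_distr Int_commute)
qed simp

(* The restriction to {..<n} keeps reflected samples in the extensional space of the product. *)
lemma unif_sample_distr_reflect:
  "distr (unif_sample n) (unif_sample n) (\<lambda>x. \<lambda>i\<in>{..<n}. 1 - x i) = unif_sample n"
proof -
  have "(\<lambda>x. \<lambda>i\<in>{..<n}. 1 - x i) = compose {..<n} (\<lambda>y::real. 1 - y)"
    by (auto simp: compose_def)
  then show ?thesis
    unfolding unif_sample_def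
    by (simp add: distr_PiM_finite_prob_space' prob_space_unif01 unif01_distr_reflect)
qed

lemma borel_measurable_order_stat:
  assumes "1 \<le> k" "k \<le> n" and sets_M: "sets M = sets borel"
  shows "order_stat n k \<in> borel_measurable (PiM {..<n} (\<lambda>_. M))"
proof (subst borel_measurable_iff_le, intro allI)
  fix a :: real
  let ?P = "PiM {..<n} (\<lambda>_. M)"
  have [measurable]: "{..a} \<in> sets M"
    by (simp add: sets_M)
  have "{x \<in> space ?P. order_stat n k x \<le> a}
      = {x \<in> space ?P. real k \<le> real (sample_count n {..a} x)}"
    using assms by (simp add: order_stat_le_iff)
  also have "\<dots> \<in> sets ?P"
    by measurable
  finally show "{x \<in> space ?P. order_stat n k x \<le> a} \<in> sets ?P" .
qed

lemma distr_order_stat_reflect: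
  assumes "1 \<le> k" "k \<le> n"
  shows "distr (unif_sample n) borel (order_stat n k)
       = distr (unif_sample n) borel (\<lambda>x. 1 - order_stat n (n - k + 1) x)"
proof -
  let ?r = "\<lambda>x. \<lambda>i\<in>{..<n}. 1 - x i"
  have [measurable]: "?r \<in> measurable (unif_sample n) (unif_sample n)"
    unfolding unif_sample_def by measurable
  have [measurable]: "order_stat n k \<in> borel_measurable (unif_sample n)"
    unfolding unif_sample_def using assms by (intro borel_measurable_order_stat) auto
  have "distr (unif_sample n) borel (order_stat n k)
      = distr (distr (unif_sample n) (unif_sample n) ?r) borel (order_stat n k)"
    by (simp add: unif_sample_distr_reflect)
  also have "\<dots> = distr (unif_sample n) borel (order_stat n k \<circ> ?r)"
    by (rule distr_distr) measurable
  also have "\<dots> = distr (unif_sample n) borel (\<lambda>x. 1 - order_stat n (n - k + 1) x)"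
    using assms by (intro distr_cong) (auto simp: order_stat_reflect)
  finally show ?thesis .
qed

lemma measure_order_stat_reflect:
  assumes "1 \<le> k" "k \<le> n" and "S \<in> sets borel"
  shows "measure (unif_sample n) {x \<in> space (unif_sample n). order_stat n k x \<in> S}
       = measure (unif_sample n) {x \<in> space (unif_sample n). 1 - order_stat n (n - k + 1) x \<in> S}"
proof -
  have "1 \<le> n - k + 1" "n - k + 1 \<le> n"
    using assms by auto
  then have reflected: "(\<lambda>x. 1 - order_stat n (n - k + 1) x) \<in> borel_measurable (unif_sample n)"
    unfolding unif_sample_def by (intro borel_measurable_diff borel_measurable_order_stat) auto
  have direct: "order_stat n k \<in> borel_measurable (unif_sample n)"
    unfolding unif_sample_def using assms by (intro borel_measurable_order_stat) auto
  have "\<And>f. {x \<in> space (unif_sample n). f x \<in> S} = f -` S \<inter> space (unif_sample n)"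
    by auto
  then show ?thesis
    by (simp only: measure_distr[OF direct assms(3), symmetric]
        measure_distr[OF reflected assms(3), symmetric] distr_order_stat_reflect[OF assms(1,2)])
qed

lemma order_stat_greater_chernoff:
  fixes a l :: real
  assumes "1 \<le> k" "k \<le> n" "0 \<le> l"
  defines "p \<equiv> measure unif01 {..a}"
  shows "measure (unif_sample n) {x \<in> space (unif_sample n). a < order_stat n k x}
           \<le> exp (l * (real k - 1)) * (1 - p + p * exp (- l)) ^ n"
    and "measure (unif_sample n) {x \<in> space (unif_sample n). a < order_stat n k x}
           \<le> exp (real n * p * (exp (- l) - 1) + l * (real k - 1))"
proof -
  let ?M = "unif_sample n"
  let ?C = "{x \<in> space ?M. 0 \<le> - l * (real (sample_count n {..a} x) - (real k - 1))}"
  interpret prob_space ?M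
    by (rule prob_space_unif_sample)
  have "{x \<in> space ?M. a < order_stat n k x} \<subseteq> ?C"
  proof safe
    fix x
    assume "x \<in> space ?M" "a < order_stat n k x"
    then have "sample_count n {..a} x < k"
      using assms by (simp add: order_stat_greater_iff)
    then show "0 \<le> - l * (real (sample_count n {..a} x) - (real k - 1))"
      using \<open>0 \<le> l\<close> by (simp add: mult_nonneg_nonpos)
  qed
  then have tail: "measure ?M {x \<in> space ?M. a < order_stat n k x} \<le> measure ?M ?C"
    by (rule finite_measure_mono) (simp add: unif_sample_def)
  show "measure ?M {x \<in> space ?M. a < order_stat n k x}
      \<le> exp (l * (real k - 1)) * (1 - p + p * exp (- l)) ^ n"
    using tail sample_count_chernoff[OF prob_space_unif01, of "{..a}" n "- l" "real k - 1"]
    unfolding unif_sample_def p_def by simp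
  show "measure ?M {x \<in> space ?M. a < order_stat n k x}
      \<le> exp (real n * p * (exp (- l) - 1) + l * (real k - 1))"
    using tail sample_count_chernoff_poisson[OF prob_space_unif01, of "{..a}" n "- l" "real k - 1"]
    unfolding unif_sample_def p_def by simp
qed

lemma order_stat_less_chernoff:
  fixes b l :: real
  assumes "1 \<le> k" "k \<le> n" "0 \<le> l"
  defines "p \<equiv> measure unif01 {..<b}"
  shows "measure (unif_sample n) {x \<in> space (unif_sample n). order_stat n k x < b}
           \<le> exp (real n * p * (exp l - 1) - l * real k)"
proof -
  let ?M = "unif_sample n"
  interpret prob_space ?M
    by (rule prob_space_unif_sample)
  have "{x \<in> space ?M. order_stat n k x < b}
      \<subseteq> {x \<in> space ?M. 0 \<le> l * (real (sample_count n {..<b} x) - real k)}"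
    using assms by (auto simp: order_stat_less_iff)
  then have "measure ?M {x \<in> space ?M. order_stat n k x < b}
      \<le> measure ?M {x \<in> space ?M. 0 \<le> l * (real (sample_count n {..<b} x) - real k)}"
    by (rule finite_measure_mono) (simp add: unif_sample_def)
  then show ?thesis
    using sample_count_chernoff_poisson[OF prob_space_unif01, of "{..<b}" n l "real k"]
    unfolding unif_sample_def p_def by simp
qed

lemma order_stat_upper_deviation:
  fixes n k :: nat and t :: real
  assumes "1 \<le> k" "k \<le> n" "0 < t"
  shows "measure (unif_sample n)
           {x \<in> space (unif_sample n). (sqrt (real k - 1) + sqrt t)\<^sup>2 / real n < order_stat n k x}
         \<le> exp (- t)"
proof -
  define a where "a = (sqrt (real k - 1) + sqrt t)\<^sup>2 / real n"
  define p where "p = measure unif01 {..a}"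
  have "0 < sqrt (real k - 1) + sqrt t"
    using assms by (simp add: add_nonneg_pos)
  then have "0 < a"
    using assms by (simp add: a_def)
  then have "p = min a 1"
    by (simp add: p_def measure_unif01_atMost)
  show ?thesis
  proof (cases "a < 1")
    case True
    then have "real n * p = (sqrt (real k - 1) + sqrt t)\<^sup>2"
      using assms by (simp add: \<open>p = min a 1\<close> a_def)
    show ?thesis
      unfolding a_def[symmetric]
    proof (rule poisson_chernoff_lower_tail)
      fix l :: real
      assume "0 \<le> l"
      with order_stat_greater_chernoff(2)[OF assms(1,2) this, of a] \<open>real n * p = _\<close>
      show "measure (unif_sample n) {x \<in> space (unif_sample n). a < order_stat n k x}
          \<le> exp ((sqrt (real k - 1) + sqrt t)\<^sup>2 * (exp (- l) - 1) + l * (real k - 1))"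
        by (simp add: p_def)
    qed (use assms in auto)
  next
    case False
    \<comment> \<open>Here \<open>p = 1\<close>: the Poisson relaxation is too weak, but the exact bound is
      \<open>exp (- l (n - k + 1))\<close>.\<close>
    define l where "l = t / (real n - (real k - 1))"
    have "0 < real n - (real k - 1)"
      using assms by simp
    then have "0 \<le> l" "l * (real n - (real k - 1)) = t"
      using assms by (simp_all add: l_def)
    then have "l * (real k - 1) - real n * l = - t"
      by (simp add: algebra_simps)
    have "measure (unif_sample n) {x \<in> space (unif_sample n). a < order_stat n k x}
        \<le> exp (l * (real k - 1)) * (1 - p + p * exp (- l)) ^ n"
      using order_stat_greater_chernoff(1)[OF assms(1,2) \<open>0 \<le> l\<close>, of a] by (simp add: p_def)
    also have "\<dots> = exp (l * (real k - 1)) * exp (- l) ^ n"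
      using False by (simp add: \<open>p = min a 1\<close>)
    also have "\<dots> = exp (l * (real k - 1) - real n * l)"
      by (simp only: exp_of_nat_mult[symmetric] mult_exp_exp) simp
    also have "\<dots> = exp (- t)"
      by (simp only: \<open>l * (real k - 1) - real n * l = - t\<close>)
    finally show ?thesis
      unfolding a_def .
  qed
qed

lemma order_stat_lower_deviation:
  fixes n k :: nat and t :: real
  assumes "1 \<le> k" "k \<le> n" "0 \<le> t" "t \<le> real k"
  shows "measure (unif_sample n)
           {x \<in> space (unif_sample n). order_stat n k x < (sqrt (real k) - sqrt t)\<^sup>2 / real n}
         \<le> exp (- 2 * t)"
proof -
  define b where "b = (sqrt (real k) - sqrt t)\<^sup>2 / real n"
  have "sqrt t \<le> sqrt (real k)"
    using assms by simp
  then have "(sqrt (real k) - sqrt t)\<^sup>2 \<le> (sqrt (real k))\<^sup>2"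
    using assms by (intro power_mono) auto
  have "0 \<le> b"
    by (simp add: b_def)
  moreover have "b \<le> 1"
    using \<open>(sqrt (real k) - sqrt t)\<^sup>2 \<le> _\<close> assms by (simp add: b_def divide_le_eq)
  ultimately have "measure unif01 {..<b} = b"
    by (rule measure_unif01_lessThan)
  then have "real n * measure unif01 {..<b} = (sqrt (real k) - sqrt t)\<^sup>2"
    using assms by (simp add: b_def)
  show ?thesis
    unfolding b_def[symmetric]
  proof (rule poisson_chernoff_upper_tail)
    fix l :: real
    assume "0 \<le> l"
    with order_stat_less_chernoff[OF assms(1,2) this, of b] \<open>real n * _ = _\<close>
    show "measure (unif_sample n) {x \<in> space (unif_sample n). order_stat n k x < b}
        \<le> exp ((sqrt (real k) - sqrt t)\<^sup>2 * (exp l - 1) - l * real k)"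
      by simp
  qed (use assms in auto)
qed

theorem lemmaA1:
  fixes n k :: nat and t :: real
  assumes "1 \<le> k" and "k \<le> n" and "t > 0"
  shows "measure (unif_sample n)
           {x \<in> space (unif_sample n). order_stat n k x > (sqrt (real k - 1) + sqrt t)^2 / real n}
         = measure (unif_sample n)
           {x \<in> space (unif_sample n). 1 - order_stat n (n - k + 1) x > (sqrt (real k - 1) + sqrt t)^2 / real n}
       \<and> measure (unif_sample n)
           {x \<in> space (unif_sample n). 1 - order_stat n (n - k + 1) x > (sqrt (real k - 1) + sqrt t)^2 / real n}
         \<le> exp (- t)
       \<and> measure (unif_sample n)
           {x \<in> space (unif_sample n). order_stat n k x < (sqrt (real k) - sqrt t)^2 / real n}
         = measure (unif_sample n)
           {x \<in> space (unif_sample n). 1 - order_stat n (n - k + 1) x < (sqrt (real k) - sqrt t)^2 / real n}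
       \<and> (t \<le> real k \<longrightarrow>
           measure (unif_sample n)
             {x \<in> space (unif_sample n). 1 - order_stat n (n - k + 1) x < (sqrt (real k) - sqrt t)^2 / real n}
           \<le> exp (- 2 * t))"
proof -
  define a b where "a = (sqrt (real k - 1) + sqrt t)^2 / real n"
    and "b = (sqrt (real k) - sqrt t)^2 / real n"
  have upper: "measure (unif_sample n) {x \<in> space (unif_sample n). a < order_stat n k x}
      = measure (unif_sample n) {x \<in> space (unif_sample n). a < 1 - order_stat n (n - k + 1) x}"
    using measure_order_stat_reflect[OF assms(1,2), of "{a<..}"] by simp
  have lower: "measure (unif_sample n) {x \<in> space (unif_sample n). order_stat n k x < b}
      = measure (unif_sample n) {x \<in> space (unif_sample n). 1 - order_stat n (n - k + 1) x < b}"
    using measure_order_stat_reflect[OF assms(1,2), of "{..<b}"] by simp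
  show ?thesis
    using upper lower order_stat_upper_deviation[OF assms]
      order_stat_lower_deviation[OF assms(1,2) less_imp_le[OF assms(3)]]
    unfolding a_def b_def by simp
qed

end
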